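(* Let $n\in\mathbf{N}$, let $A\subset[n]$ have property P, let $k,a,q$ be positive integers and $0\leqslant\alpha\leqslant1$. Let $B$ be a finite set such that every element of $k\cdot B$ is a positive integer which is an integer multiple of some element of $A\cap[1,\alpha n]$, every element of $k\cdot B$ is congruent to $a$ modulo $q$, and $k\cdot B\subset I$ for some interval of integers $I$. Then $$|B|+\left|\left(A_{(\alpha,1]}+A_{(\alpha,1]}\right)\cap I\cap(a+q\mathbf{N})\right|<\frac{|I|}{q}+1.$$
   Context: A set $A\subset\mathbf{N}$ has property P if there are no $x,y,z\in A$ (not necessarily distinct $x,y$) with $z<x$, $z<y$ and $z\mid x+y$. For reals $0\le\alpha<\beta\le1$, $A_{(\alpha,\beta]}=A\cap(\alpha n,\beta n]$. $[\beta]=[1,\beta]\cap\mathbf{N}$; an interval means a set of consecutive integers. $k\cdot B=\{kb:b\in B\}$, $X+Y=\{x+y:x\in X,y\in Y\}$, $a+q\mathbf{N}=\{a+qm:m\in\mathbf{N}\}$. *)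

theory Defs
  imports Complex_Main
begin

definition propP :: "int set \<Rightarrow> bool" where
  "propP A \<longleftrightarrow> \<not> (\<exists>x\<in>A. \<exists>y\<in>A. \<exists>z\<in>A. z < x \<and> z < y \<and> z dvd (x + y))"

definition Aint :: "int set \<Rightarrow> nat \<Rightarrow> real \<Rightarrow> real \<Rightarrow> int set" where
  "Aint A n \<alpha> \<beta> = {x\<in>A. \<alpha> * real n < real_of_int x \<and> real_of_int x \<le> \<beta> * real n}"

definition sumset :: "int set \<Rightarrow> int set \<Rightarrow> int set" where
  "sumset X Y = {x + y | x y. x \<in> X \<and> y \<in> Y}"

end

theory Submission
  imports Defs
begin

text \<open>
  Scaling by k maps B injectively into the residue class of a modulo q inside I, and so does
  the inclusion of the sumset part. The two images are disjoint: an element k b is a multiple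
  of some z \<in> A with z \<le> \<alpha> n, and if it were x + y with x, y \<in> A beyond \<alpha> n, then z < x, z < y
  and z divides x + y, contradicting property P. Hence both cardinalities add up to at most
  the size of a residue class in I, which is less than |I|/q + 1.
\<close>

lemma card_residue_class_atLeastAtMost:
  fixes c d q r :: int
  assumes "q > 0"
  shows "q * int (card {m\<in>{c..d}. m mod q = r}) < int (card {c..d}) + q"
proof (cases "c \<le> d")
  case False
  then show ?thesis using assms by simp
next
  case True
  let ?C = "{m\<in>{c..d}. m mod q = r}"
  let ?f = "\<lambda>m. (m - c) div q"
  \<comment> \<open>Within one residue class, the quotient by q determines the element.\<close>
  have "inj_on ?f ?C"
  proof (rule inj_onI)
    fix x y assume "x \<in> ?C" "y \<in> ?C" and "?f x = ?f y"
    moreover from \<open>x \<in> ?C\<close> \<open>y \<in> ?C\<close> have "(x - c) mod q = (y - c) mod q"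
      by (simp add: mod_diff_cong)
    ultimately have "x - c = y - c" by (metis div_mult_mod_eq)
    then show "x = y" by simp
  qed
  then have "card ?C = card (?f ` ?C)" by (simp add: card_image)
  also have "\<dots> \<le> card {0..(d - c) div q}"
    using assms by (intro card_mono) (auto intro!: zdiv_mono1 simp: pos_imp_zdiv_nonneg_iff)
  finally have "card ?C \<le> nat ((d - c) div q + 1)" by simp
  moreover have "0 \<le> (d - c) div q" using True assms by (simp add: pos_imp_zdiv_nonneg_iff)
  ultimately have "int (card ?C) \<le> (d - c) div q + 1" by (simp add: le_nat_iff)
  then have "q * int (card ?C) \<le> q * ((d - c) div q + 1)"
    using assms by (intro mult_left_mono) auto
  moreover have "q * ((d - c) div q) \<le> d - c"
    using assms mult_div_mod_eq[of q "d - c"] pos_mod_sign[of q "d - c"] by linarith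
  ultimately show ?thesis using True by (simp add: distrib_left)
qed

lemma card_residue_class_atLeastAtMost_real:
  fixes c d q r :: int
  assumes "q > 0"
  shows "real (card {m\<in>{c..d}. m mod q = r}) < real (card {c..d}) / real_of_int q + 1"
proof -
  have "real_of_int (q * int (card {m\<in>{c..d}. m mod q = r})) < real_of_int (int (card {c..d}) + q)"
    using card_residue_class_atLeastAtMost[OF assms] by (simp only: of_int_less_iff)
  then have "real_of_int q * real (card {m\<in>{c..d}. m mod q = r}) < real (card {c..d}) + real_of_int q"
    by (simp only: of_int_mult of_int_add of_int_of_nat_eq)
  then show ?thesis using assms by (simp add: field_simps)
qed

lemma propP_multiple_notin_sumset_Aint:
  assumes "propP A" "z \<in> A" "real_of_int z \<le> \<alpha> * real n" "z dvd m"
  shows "m \<notin> sumset (Aint A n \<alpha> \<beta>) (Aint A n \<alpha> \<beta>)"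
proof
  assume "m \<in> sumset (Aint A n \<alpha> \<beta>) (Aint A n \<alpha> \<beta>)"
  then obtain x y where "x \<in> A" "y \<in> A" "z < x" "z < y" "m = x + y"
    using assms(3) unfolding sumset_def Aint_def by force
  then show False using assms(1,2,4) unfolding propP_def by blast
qed

lemma card_add_le_card_of_disjoint_inj_image:
  assumes "inj_on g B" "finite C" "g ` B \<subseteq> C" "S \<subseteq> C" "g ` B \<inter> S = {}"
  shows "card B + card S \<le> card C"
proof -
  have "card B + card S = card (g ` B \<union> S)"
    using assms by (simp add: card_image card_Un_disjoint finite_subset)
  also have "\<dots> \<le> card C"
    using assms by (intro card_mono) auto
  finally show ?thesis .
qed

theorem mainTheorem5:
  fixes n :: nat and A :: "int set" and k a q :: int and \<alpha> :: real
    and B :: "real set" and I :: "int set"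
  assumes "A \<subseteq> {1..int n}" and "propP A"
    and "k > 0" "a > 0" "q > 0"
    and "0 \<le> \<alpha>" "\<alpha> \<le> 1"
    and "finite B"
    and "\<forall>b\<in>B. \<exists>m::int. real_of_int k * b = real_of_int m \<and> m > 0
           \<and> (\<exists>d\<in>A. 1 \<le> d \<and> real_of_int d \<le> \<alpha> * real n \<and> d dvd m)
           \<and> m mod q = a mod q \<and> m \<in> I"
    and "\<exists>c d. I = {c..d}"
  shows "real (card B)
    + real (card (sumset (Aint A n \<alpha> 1) (Aint A n \<alpha> 1) \<inter> I \<inter> {a + q * int m | m. True}))
    < real (card I) / real_of_int q + 1"
proof -
  obtain c d where I: "I = {c..d}" using assms(10) by blast
  define S where "S = sumset (Aint A n \<alpha> 1) (Aint A n \<alpha> 1) \<inter> I \<inter> {a + q * int m | m. True}"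
  define C where "C = {m\<in>I. m mod q = a mod q}"
  define g where "g b = \<lfloor>real_of_int k * b\<rfloor>" for b
  have gB: "real_of_int k * b = real_of_int (g b)
           \<and> (\<exists>z\<in>A. real_of_int z \<le> \<alpha> * real n \<and> z dvd g b) \<and> g b \<in> C" if "b \<in> B" for b
    using assms(9) that unfolding g_def C_def by force
  have "inj_on g B"
  proof (rule inj_onI)
    fix x y assume "x \<in> B" "y \<in> B" "g x = g y"
    then have "real_of_int k * x = real_of_int k * y" using gB by metis
    then show "x = y" using assms(3) by simp
  qed
  moreover have "S \<subseteq> C"
    unfolding S_def C_def using assms(5) by (auto simp: mod_add_left_eq)
  moreover have "g ` B \<inter> S = {}"
  proof -
    have "g b \<notin> S" if "b \<in> B" for b
      using gB[OF that] propP_multiple_notin_sumset_Aint[OF assms(2)] unfolding S_def by blast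
    then show ?thesis by blast
  qed
  moreover have "finite C" unfolding C_def I by (rule finite_subset[of _ "{c..d}"]) auto
  ultimately have "card B + card S \<le> card C"
    using gB by (intro card_add_le_card_of_disjoint_inj_image) blast+
  then show ?thesis
    using card_residue_class_atLeastAtMost_real[OF assms(5), of c d "a mod q"]
    unfolding C_def S_def I by linarith
qed

end
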